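(* If $\Gamma\vdash M:\sigma$ is derivable in $\cap ES$, then $\Gamma\vdash M^{\flat}:\sigma$ is derivable in $\cap J$.
   Context: Terms $\mathtt T_J$: $t,u,r ::= x \mid \lambda x.t \mid t(u,y.r)$ ($y$ bound in $r$), up to $\alpha$-equivalence. ES terms: $M,N,P ::= x \mid \lambda x.M \mid MN \mid M[x\backslash N]$ ($x$ bound in $M$ in $M[x\backslash N]$). Translation $(\cdot)^\flat$: ES $\to\mathtt T_J$: $x^\flat=x$, $(\lambda x.M)^\flat=\lambda x.M^\flat$, $(MN)^\flat=M^\flat(N^\flat,z.z)$, $(M[x\backslash N])^\flat=(\lambda z.z)(N^\flat,x.M^\flat)$ ($z$ fresh). Types $\sigma,\tau ::= \alpha \mid \mathcal M\to\sigma$, $\mathcal M=[\sigma_i]_{i\in I}$ a finite possibly empty multiset; $\sqcup$ multiset union; environments map variables to multisets, $\wedge$ pointwise union, $\Gamma;x:\mathcal M$ extension with $x\notin\mathrm{dom}\,\Gamma$; $\mathrm{ch}(\mathcal M)=\mathcal M$ if $\mathcal M\ne[\,]$, $\mathrm{ch}([\,])=[\tau]$ for an arbitrary $\tau$. Both systems share rules (var) $x:[\sigma]\vdash x:\sigma$; (abs) from $\Gamma;x:\mathcal M\vdash t:\sigma$ infer $\Gamma\vdash\lambda x.t:\mathcal M\to\sigma$; (many) from $(\Gamma_i\vdash t:\sigma_i)_{i\in I}$, $I\ne\emptyset$, infer $\wedge_i\Gamma_i\vdash t:[\sigma_i]_{i\in I}$. $\cap J$ additionally has (app): from $\Gamma\vdash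 t:\mathrm{ch}([\mathcal M_i\to\tau_i]_{i\in I})$, $\Delta\vdash u:\mathrm{ch}(\sqcup_i\mathcal M_i)$, $\Lambda;y:[\tau_i]_{i\in I}\vdash r:\sigma$ infer $\Gamma\wedge\Delta\wedge\Lambda\vdash t(u,y.r):\sigma$. $\cap ES$ additionally has (app): from $\Gamma\vdash M:\mathcal M\to\sigma$ and $\Delta\vdash N:\mathrm{ch}(\mathcal M)$ infer $\Gamma\wedge\Delta\vdash MN:\sigma$; and (sub): from $\Gamma;x:\mathcal M\vdash P:\sigma$ and $\Delta\vdash N:\mathrm{ch}(\mathcal M)$ infer $\Gamma\wedge\Delta\vdash P[x\backslash N]:\sigma$. *)

theory Defs
  imports "HOL-Library.Multiset"
begin

text \<open>Terms are represented with de Bruijn indices, so that they are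
  identified up to alpha-equivalence; a binder binds index 0.\<close>

(* T_J terms: x | \<lambda>x.t | t(u, y.r) with y (index 0) bound in r *)
datatype jterm = JVar nat | JLam jterm | JApp jterm jterm jterm

(* ES terms: x | \<lambda>x.M | M N | M[x\N] with x (index 0) bound in M *)
datatype esterm = EVar nat | ELam esterm | EAppl esterm esterm | ESub esterm esterm

(* translation (.)^flat; the fresh z is the bound index 0 *)
fun flat :: "esterm \<Rightarrow> jterm" where
  "flat (EVar x) = JVar x"
| "flat (ELam M) = JLam (flat M)"
| "flat (EAppl M N) = JApp (flat M) (flat N) (JVar 0)"
| "flat (ESub M N) = JApp (JLam (JVar 0)) (flat N) (flat M)"

datatype ty = TyVar nat | Fun "ty multiset" ty

type_synonym env = "nat \<Rightarrow> ty multiset"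

definition env_and :: "env \<Rightarrow> env \<Rightarrow> env" where
  "env_and \<Gamma> \<Delta> = (\<lambda>x. \<Gamma> x + \<Delta> x)"

(* \<Gamma>; x:\<M>  -- extension by the newly bound variable (index 0) *)
definition env_ext :: "env \<Rightarrow> ty multiset \<Rightarrow> env" where
  "env_ext \<Gamma> M = (\<lambda>n. case n of 0 \<Rightarrow> M | Suc k \<Rightarrow> \<Gamma> k)"

definition env_single :: "nat \<Rightarrow> ty \<Rightarrow> env" where
  "env_single x \<sigma> = (\<lambda>y. if y = x then {#\<sigma>#} else {#})"

(* is_ch M M' : M' is a possible value of ch(M) *)
definition is_ch :: "ty multiset \<Rightarrow> ty multiset \<Rightarrow> bool" where
  "is_ch M M' \<longleftrightarrow> (M \<noteq> {#} \<and> M' = M) \<or> (M = {#} \<and> (\<exists>\<tau>. M' = {#\<tau>#}))"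

(* System \<cap>J; tyJm encodes rule (many) for a non-empty finite family *)
inductive tyJ :: "env \<Rightarrow> jterm \<Rightarrow> ty \<Rightarrow> bool"
  and tyJm :: "env \<Rightarrow> jterm \<Rightarrow> ty multiset \<Rightarrow> bool" where
  J_var: "tyJ (env_single x \<sigma>) (JVar x) \<sigma>"
| J_abs: "tyJ (env_ext \<Gamma> M) t \<sigma> \<Longrightarrow> tyJ \<Gamma> (JLam t) (Fun M \<sigma>)"
| J_many1: "tyJ \<Gamma> t \<sigma> \<Longrightarrow> tyJm \<Gamma> t {#\<sigma>#}"
| J_many2: "tyJm \<Gamma> t Ms \<Longrightarrow> tyJ \<Delta> t \<sigma> \<Longrightarrow> tyJm (env_and \<Gamma> \<Delta>) t (add_mset \<sigma> Ms)"
| J_app: "is_ch (image_mset (\<lambda>(M, \<tau>). Fun M \<tau>) P) A \<Longrightarrow> tyJm \<Gamma> t A \<Longrightarrow>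
          is_ch (sum_mset (image_mset fst P)) B \<Longrightarrow> tyJm \<Delta> u B \<Longrightarrow>
          tyJ (env_ext \<Lambda> (image_mset snd P)) r \<sigma> \<Longrightarrow>
          tyJ (env_and (env_and \<Gamma> \<Delta>) \<Lambda>) (JApp t u r) \<sigma>"

inductive tyES :: "env \<Rightarrow> esterm \<Rightarrow> ty \<Rightarrow> bool"
  and tyESm :: "env \<Rightarrow> esterm \<Rightarrow> ty multiset \<Rightarrow> bool" where
  ES_var: "tyES (env_single x \<sigma>) (EVar x) \<sigma>"
| ES_abs: "tyES (env_ext \<Gamma> M) t \<sigma> \<Longrightarrow> tyES \<Gamma> (ELam t) (Fun M \<sigma>)"
| ES_many1: "tyES \<Gamma> t \<sigma> \<Longrightarrow> tyESm \<Gamma> t {#\<sigma>#}"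
| ES_many2: "tyESm \<Gamma> t Ms \<Longrightarrow> tyES \<Delta> t \<sigma> \<Longrightarrow> tyESm (env_and \<Gamma> \<Delta>) t (add_mset \<sigma> Ms)"
| ES_app: "tyES \<Gamma> M (Fun Ms \<sigma>) \<Longrightarrow> is_ch Ms B \<Longrightarrow> tyESm \<Delta> N B \<Longrightarrow>
           tyES (env_and \<Gamma> \<Delta>) (EAppl M N) \<sigma>"
| ES_sub: "tyES (env_ext \<Gamma> Ms) P \<sigma> \<Longrightarrow> is_ch Ms B \<Longrightarrow> tyESm \<Delta> N B \<Longrightarrow>
           tyES (env_and \<Gamma> \<Delta>) (ESub P N) \<sigma>"

end

theory Submission
  imports Defs
begin

text \<open>Both constructors of \<open>\<cap>ES\<close> not present in \<open>\<cap>J\<close> are admissible there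
  on their translations. An application \<open>M N\<close> becomes \<open>M(N, z.z)\<close>, typed by the
  generalized application rule with the one-element family \<open>[\<M> \<rightarrow> \<sigma>]\<close>. An
  explicit substitution \<open>P[x\<setminus>N]\<close> becomes \<open>(\<lambda>z.z)(N, x.P)\<close>: if \<open>x : \<M>\<close> in \<open>P\<close>,
  the identity is typed with the family of all \<open>[\<tau>] \<rightarrow> \<tau>\<close> for \<open>\<tau> \<in> \<M>\<close>, whose
  domains sum to \<open>\<M>\<close> and whose codomains form \<open>\<M>\<close> again; for \<open>\<M> = []\<close> the family is empty and the
  identity gets an arbitrary type.\<close>

abbreviation env_empty :: env where
  "env_empty \<equiv> \<lambda>_. {#}"

lemma env_and_empty_right [simp]: "env_and \<Gamma> env_empty = \<Gamma>"
  by (simp add: env_and_def)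

lemma env_and_empty_left [simp]: "env_and env_empty \<Gamma> = \<Gamma>"
  by (simp add: env_and_def)

lemma env_and_commute: "env_and \<Gamma> \<Delta> = env_and \<Delta> \<Gamma>"
  by (simp add: env_and_def add.commute)

lemma env_ext_empty_single: "env_ext env_empty {#\<tau>#} = env_single 0 \<tau>"
  by (rule ext) (simp add: env_ext_def env_single_def split: nat.split)

lemma tyJ_identity: "tyJ env_empty (JLam (JVar 0)) (Fun {#\<tau>#} \<tau>)"
  by (rule J_abs) (simp add: env_ext_empty_single J_var)

lemma tyJm_identity:
  assumes "A \<noteq> {#}"
  shows "tyJm env_empty (JLam (JVar 0)) (image_mset (\<lambda>\<tau>. Fun {#\<tau>#} \<tau>) A)"
  using assms
proof (induction A)
  case empty
  then show ?case by simp
next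
  case (add \<tau> A)
  show ?case
  proof (cases "A = {#}")
    case True
    then show ?thesis by (simp add: J_many1 tyJ_identity)
  next
    case False
    with add.IH J_many2[OF _ tyJ_identity[of \<tau>]] show ?thesis by fastforce
  qed
qed

lemma tyJ_app_translation:
  assumes "tyJ \<Gamma> t (Fun Ms \<sigma>)" and "is_ch Ms B" and "tyJm \<Delta> u B"
  shows "tyJ (env_and \<Gamma> \<Delta>) (JApp t u (JVar 0)) \<sigma>"
proof -
  have "is_ch (image_mset (\<lambda>(M, \<tau>). Fun M \<tau>) {#(Ms, \<sigma>)#}) {#Fun Ms \<sigma>#}"
    by (simp add: is_ch_def)
  moreover have "tyJ (env_ext env_empty (image_mset snd {#(Ms, \<sigma>)#})) (JVar 0) \<sigma>"
    by (simp add: env_ext_empty_single J_var)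
  ultimately show ?thesis
    using J_app[OF _ J_many1[OF assms(1)] _ assms(3)] assms(2) by fastforce
qed

lemma tyJ_sub_translation:
  assumes r: "tyJ (env_ext \<Gamma> Ms) r \<sigma>" and "is_ch Ms B" and u: "tyJm \<Delta> u B"
  shows "tyJ (env_and \<Gamma> \<Delta>) (JApp (JLam (JVar 0)) u r) \<sigma>"
proof -
  obtain P :: "(ty multiset \<times> ty) multiset" and A
    where "is_ch (image_mset (\<lambda>(M, \<tau>). Fun M \<tau>) P) A"
      and "tyJm env_empty (JLam (JVar 0)) A"
      and "sum_mset (image_mset fst P) = Ms" and "image_mset snd P = Ms"
  proof (cases "Ms = {#}")
    case True
    show ?thesis
      by (rule that[of "{#}" "{#Fun {#TyVar 0#} (TyVar 0)#}"])
        (simp_all add: True is_ch_def J_many1 tyJ_identity)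
  next
    case False
    have "sum_mset (image_mset (\<lambda>\<tau>. {#\<tau>#}) Ms) = Ms"
      by (induction Ms) auto
    with False show ?thesis
      by (intro that[of "image_mset (\<lambda>\<tau>. ({#\<tau>#}, \<tau>)) Ms"
            "image_mset (\<lambda>\<tau>. Fun {#\<tau>#} \<tau>) Ms"])
        (simp_all add: is_ch_def tyJm_identity multiset.map_comp comp_def)
  qed
  with J_app[OF _ _ _ u] r \<open>is_ch Ms B\<close>
  have "tyJ (env_and (env_and env_empty \<Delta>) \<Gamma>) (JApp (JLam (JVar 0)) u r) \<sigma>"
    by metis
  then show ?thesis by (simp add: env_and_commute)
qed

lemma tyES_flat:
  shows "tyES \<Gamma> M \<sigma> \<Longrightarrow> tyJ \<Gamma> (flat M) \<sigma>"
    and "tyESm \<Gamma> M Ms \<Longrightarrow> tyJm \<Gamma> (flat M) Ms"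
proof (induction rule: tyES_tyESm.inducts)
  case ES_var
  then show ?case by (simp add: J_var)
next
  case ES_abs
  then show ?case by (simp add: J_abs)
next
  case ES_many1
  then show ?case by (simp add: J_many1)
next
  case ES_many2
  then show ?case by (simp add: J_many2)
next
  case ES_app
  then show ?case by (simp add: tyJ_app_translation)
next
  case ES_sub
  then show ?case by (simp add: tyJ_sub_translation)
qed

theorem mainTheorem18:
  assumes "tyES \<Gamma> M \<sigma>"
  shows "tyJ \<Gamma> (flat M) \<sigma>"
  using assms by (rule tyES_flat(1))

end
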